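(* Let $\Pi$ be a ground HEX-program, let $\hat{\mathbf{A}}$ be a compatible set of $\Pi$, and let $\mathbf{A}$ be the restriction of $\hat{\mathbf{A}}$ to the non-replacement (ordinary) atoms. Suppose the atom dependency graph of $\Pi$ contains no e-cycle under $\rightarrow^{d}$, and the guessing program $\hat{\Pi}$ has no nonempty unfounded set with respect to $\hat{\mathbf{A}}$. Then $\mathbf{A}$ is unfounded-free for $\Pi$, i.e. $\mathbf{A}^{\mathbf{T}}\cap X=\emptyset$ for every unfounded set $X$ of $\Pi$ with respect to $\mathbf{A}$.
   Context: Ground HEX-programs. A ground ordinary atom is $p(c_1,\dots,c_\ell)$ with predicate $p$ and constants $c_i$. A ground external atom is $\&g[\vec p](\vec c)$ with input list $\vec p=p_1,\dots,p_k$ (predicate names or constants) and output list $\vec c$ of constants. A ground HEX-program is a finite set of rules $r$: $a_1\lor\dots\lor a_k\leftarrow b_1,\dots,b_m,\mathrm{not}\,b_{m+1},\dots,\mathrm{not}\,b_n$, where the $a_i$ are ordinary ground atoms and each $b_j$ is an ordinary ground atom or ground external atom; $H(r)=\{a_1,\dots,a_k\}$, $B^+(r)=\{b_1,\dots,b_m\}$, $B^-(r)=\{b_{m+1},\dots,b_n\}$, $B(r)$ is the set of body literals. $A(\Pi)$ is the set of ordinary atoms occurring in $\Pi$. Interpretations. An interpretation $\mathbf{A}$ is a complete consistent set of signed literals $\mathbf{T}a$/$\mathbf{F}a$ over ground atoms; $\mathbf{A}^{\mathbf{T}}=\{a\mid \mathbf{T}a\in\mathbf{A}\}$. $\mathbf{A}\models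 a$ for ordinary $a$ iff $\mathbf{T}a\in\mathbf{A}$; each external predicate $\&g$ has a Boolean oracle $f_{\&g}(\mathbf{A},\vec p,\vec c)$ whose value depends only on the extensions in $\mathbf{A}$ of the input predicates in $\vec p$ (and on $\vec p,\vec c$), and $\mathbf{A}\models\&g[\vec p](\vec c)$ iff $f_{\&g}(\mathbf{A},\vec p,\vec c)=1$; $\mathbf{A}\models\mathrm{not}\,b$ iff $\mathbf{A}\not\models b$. Unfounded sets. For a program $\Pi$, interpretation $\mathbf{A}$ and a set $X$ of ordinary ground atoms appearing in $\Pi$, let $\mathbf{A}\,\dot\cup\neg.\,X=(\mathbf{A}\setminus\{\mathbf{T}a\mid a\in X\})\cup\{\mathbf{F}a\mid a\in X\}$. $X$ is an unfounded set of $\Pi$ w.r.t. $\mathbf{A}$ iff for every rule $r\in\Pi$ with $H(r)\cap X\neq\emptyset$ at least one holds: (i) some literal of $B(r)$ is false w.r.t. $\mathbf{A}$; (ii) some literal of $B(r)$ is false w.r.t. $\mathbf{A}\,\dot\cup\neg.\,X$; (iii) some atom of $H(r)\setminus X$ is true w.r.t. $\mathbf{A}$. Guessing program and compatible sets. $\hat\Pi$ is obtained from $\Pi$ by replacing each external atom $\&g[\vec p](\vec c)$ by a new ordinary replacement atom $e_{\&g[\vec p]}(\vec c)$ and adding the rule $e_{\&g[\vec p]}(\vec c)\lor ne_{\&g[\vec p]}(\vec c)\leftarrow$. A compatible set of $\Pi$ is an interpretation $\hat{\mathbf{A}}$ that is an answer set (Gelfond–Lifschitz) of $\hat\Pi$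 and such that $f_{\&g}(\hat{\mathbf{A}},\vec p,\vec c)=1$ iff $\mathbf{T}e_{\&g[\vec p]}(\vec c)\in\hat{\mathbf{A}}$ for all external atoms $\&g[\vec p](\vec c)$ of $\Pi$. Dependencies. For ground atoms $x,y$: $x\rightarrow y$ iff some rule $r\in\Pi$ has $x\in H(r)$ and $y\in B^+(r)$; $x\rightarrow_e y$ iff some rule $r\in\Pi$ has $x\in H(r)$ and an external atom $\&g[q_1,\dots,q_n](\vec e)\in B^+(r)\cup B^-(r)$ with $q_i$ equal to the predicate of $y$ for some $i$ (edges of the second kind are called e-edges). Let $\rightarrow^d=\rightarrow\cup\leftarrow\cup\rightarrow_e$ where $\leftarrow$ is the inverse of $\rightarrow$. A cycle under a relation $\circ$ is a sequence $c_0,\dots,c_{n+1}$, $n\ge0$, with $(c_i,c_{i+1})\in\circ$ for all $0\le i\le n$ and $c_0=c_{n+1}$; an e-cycle is a cycle under $\rightarrow^d$ with $(c_i,c_{i+1})\in\rightarrow_e$ for some $i$. *)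

theory Defs
  imports Main
begin

text \<open>'p: predicate names, 'c: constants, 'g: external predicate names.
  Inputs of external atoms are predicate names or constants.\<close>
datatype ('p, 'c) inp = IP 'p | IC 'c

text \<open>EA g ps cs and NEA g ps cs are
  the fresh replacement atoms e_{&g[ps]}(cs) and ne_{&g[ps]}(cs) used in the guessing
  program; they have their own (new) predicates, distinct from every 'p.\<close>
datatype ('p, 'c, 'g) atom =
    OA 'p "'c list"
  | EA 'g "('p, 'c) inp list" "'c list"
  | NEA 'g "('p, 'c) inp list" "'c list"

fun is_ordinary :: "('p, 'c, 'g) atom \<Rightarrow> bool" where
  "is_ordinary (OA p cs) = True"
| "is_ordinary _ = False"

datatype ('p, 'c, 'g) batom =
    Ord "('p, 'c, 'g) atom"
  | Ext 'g "('p, 'c) inp list" "'c list"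

datatype ('p, 'c, 'g) rule =
  Rule (H: "('p, 'c, 'g) atom set") (Bpos: "('p, 'c, 'g) batom set") (Bneg: "('p, 'c, 'g) batom set")

type_synonym ('p, 'c, 'g) program = "('p, 'c, 'g) rule set"

definition hex_program :: "('p, 'c, 'g) program \<Rightarrow> bool" where
  "hex_program P \<longleftrightarrow> finite P \<and>
     (\<forall>r\<in>P. finite (H r) \<and> finite (Bpos r) \<and> finite (Bneg r)
        \<and> (\<forall>a\<in>H r. is_ordinary a)
        \<and> (\<forall>a. Ord a \<in> Bpos r \<union> Bneg r \<longrightarrow> is_ordinary a))"

definition atoms_of :: "('p, 'c, 'g) program \<Rightarrow> ('p, 'c, 'g) atom set" where
  "atoms_of P = (\<Union>r\<in>P. H r \<union> {a. Ord a \<in> Bpos r \<union> Bneg r})"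

definition ext_atoms :: "('p, 'c, 'g) program \<Rightarrow> ('p, 'c, 'g) batom set" where
  "ext_atoms P = (\<Union>r\<in>P. {b \<in> Bpos r \<union> Bneg r. \<exists>g ps cs. b = Ext g ps cs})"

text \<open>An interpretation (complete consistent set of signed literals) is represented by
  the set of its true atoms A^T.\<close>
type_synonym ('p, 'c, 'g) orcl =
  "'g \<Rightarrow> ('p, 'c, 'g) atom set \<Rightarrow> ('p, 'c) inp list \<Rightarrow> 'c list \<Rightarrow> bool"

definition orc_local :: "('p, 'c, 'g) orcl \<Rightarrow> bool" where
  "orc_local f \<longleftrightarrow> (\<forall>g A B ps cs.
     (\<forall>p args. IP p \<in> set ps \<longrightarrow> (OA p args \<in> A \<longleftrightarrow> OA p args \<in> B))
     \<longrightarrow> f g A ps cs = f g B ps cs)"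

fun sat :: "('p, 'c, 'g) orcl \<Rightarrow> ('p, 'c, 'g) atom set \<Rightarrow> ('p, 'c, 'g) batom \<Rightarrow> bool" where
  "sat f A (Ord a) = (a \<in> A)"
| "sat f A (Ext g ps cs) = f g A ps cs"

definition body_false :: "('p, 'c, 'g) orcl \<Rightarrow> ('p, 'c, 'g) atom set \<Rightarrow> ('p, 'c, 'g) rule \<Rightarrow> bool" where
  "body_false f A r \<longleftrightarrow> (\<exists>b\<in>Bpos r. \<not> sat f A b) \<or> (\<exists>b\<in>Bneg r. sat f A b)"

text \<open>Unfounded sets; A \<union>. \<not>.X has true atoms A - X.\<close>
definition unfounded :: "('p, 'c, 'g) program \<Rightarrow> ('p, 'c, 'g) orcl \<Rightarrow> ('p, 'c, 'g) atom set
    \<Rightarrow> ('p, 'c, 'g) atom set \<Rightarrow> bool" where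
  "unfounded P f A X \<longleftrightarrow> X \<subseteq> atoms_of P \<and>
     (\<forall>r\<in>P. H r \<inter> X \<noteq> {} \<longrightarrow>
        body_false f A r \<or> body_false f (A - X) r \<or> (H r - X) \<inter> A \<noteq> {})"

definition unfounded_free :: "('p, 'c, 'g) program \<Rightarrow> ('p, 'c, 'g) orcl \<Rightarrow> ('p, 'c, 'g) atom set \<Rightarrow> bool" where
  "unfounded_free P f A \<longleftrightarrow> (\<forall>X. unfounded P f A X \<longrightarrow> A \<inter> X = {})"

fun repl :: "('p, 'c, 'g) batom \<Rightarrow> ('p, 'c, 'g) batom" where
  "repl (Ord a) = Ord a"
| "repl (Ext g ps cs) = Ord (EA g ps cs)"

definition guess_prog :: "('p, 'c, 'g) program \<Rightarrow> ('p, 'c, 'g) program" where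
  "guess_prog P =
     (\<lambda>r. Rule (H r) (repl ` Bpos r) (repl ` Bneg r)) ` P
     \<union> {Rule {EA g ps cs, NEA g ps cs} {} {} | g ps cs. Ext g ps cs \<in> ext_atoms P}"

fun osat :: "('p, 'c, 'g) atom set \<Rightarrow> ('p, 'c, 'g) batom \<Rightarrow> bool" where
  "osat A (Ord a) = (a \<in> A)"
| "osat A (Ext g ps cs) = False"

definition is_model :: "('p, 'c, 'g) program \<Rightarrow> ('p, 'c, 'g) atom set \<Rightarrow> bool" where
  "is_model P A \<longleftrightarrow> (\<forall>r\<in>P. (\<forall>b\<in>Bpos r. osat A b) \<and> (\<forall>b\<in>Bneg r. \<not> osat A b)
                               \<longrightarrow> H r \<inter> A \<noteq> {})"

definition gl_reduct :: "('p, 'c, 'g) program \<Rightarrow> ('p, 'c, 'g) atom set \<Rightarrow> ('p, 'c, 'g) program" where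
  "gl_reduct P A = (\<lambda>r. Rule (H r) (Bpos r) {}) ` {r \<in> P. \<forall>b\<in>Bneg r. \<not> osat A b}"

definition answer_set :: "('p, 'c, 'g) program \<Rightarrow> ('p, 'c, 'g) atom set \<Rightarrow> bool" where
  "answer_set P A \<longleftrightarrow> is_model (gl_reduct P A) A \<and>
     (\<forall>B. B \<subset> A \<longrightarrow> \<not> is_model (gl_reduct P A) B)"

definition compatible_set :: "('p, 'c, 'g) program \<Rightarrow> ('p, 'c, 'g) orcl \<Rightarrow> ('p, 'c, 'g) atom set \<Rightarrow> bool" where
  "compatible_set P f A \<longleftrightarrow> answer_set (guess_prog P) A \<and>
     (\<forall>g ps cs. Ext g ps cs \<in> ext_atoms P \<longrightarrow> (f g A ps cs \<longleftrightarrow> EA g ps cs \<in> A))"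

definition dep :: "('p, 'c, 'g) program \<Rightarrow> (('p, 'c, 'g) atom \<times> ('p, 'c, 'g) atom) set" where
  "dep P = {(x, y). \<exists>r\<in>P. x \<in> H r \<and> Ord y \<in> Bpos r}"

definition edep :: "('p, 'c, 'g) program \<Rightarrow> (('p, 'c, 'g) atom \<times> ('p, 'c, 'g) atom) set" where
  "edep P = {(x, y). \<exists>r\<in>P. x \<in> H r \<and>
     (\<exists>g ps cs. Ext g ps cs \<in> Bpos r \<union> Bneg r \<and>
        (\<exists>q args. IP q \<in> set ps \<and> y = OA q args))}"

definition ddep :: "('p, 'c, 'g) program \<Rightarrow> (('p, 'c, 'g) atom \<times> ('p, 'c, 'g) atom) set" where
  "ddep P = dep P \<union> (dep P)\<inverse> \<union> edep P"

definition has_e_cycle :: "('p, 'c, 'g) program \<Rightarrow> bool" where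
  "has_e_cycle P \<longleftrightarrow> (\<exists>cs. length cs \<ge> 2 \<and> hd cs = last cs \<and>
     (\<forall>i. Suc i < length cs \<longrightarrow> (cs ! i, cs ! Suc i) \<in> ddep P) \<and>
     (\<exists>i. Suc i < length cs \<and> (cs ! i, cs ! Suc i) \<in> edep P))"

end

theory Submission
  imports Defs
begin

text \<open>Suppose X is unfounded for P w.r.t. the ordinary part A of the compatible set and
  Z = A \<inter> X is nonempty. Without e-cycles, the relation "u reaches w along dependency edges
  and w has an e-edge to v" is acyclic, so on the finite set Z it has an element z without
  successors in Z. The set Y of atoms of Z reachable from z along dependency edges is then
  closed under positive dependencies inside Z, and no external atom in a rule with head in Y
  reads an atom of Z. So falsifying X changes the body of such a rule only through a positive
  ordinary atom in Y, and Y is a nonempty unfounded set of the guessing program w.r.t. the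
  compatible set.\<close>

lemma rtrancl_imp_successively_path:
  assumes "(x, y) \<in> R\<^sup>*"
  obtains cs where "cs \<noteq> []" "hd cs = x" "last cs = y" "successively (\<lambda>a b. (a, b) \<in> R) cs"
  using assms
proof (induction arbitrary: thesis rule: rtrancl_induct)
  case base
  show ?case by (rule base[of "[x]"]) simp_all
next
  case (step y z)
  obtain cs where "cs \<noteq> []" "hd cs = x" "last cs = y" "successively (\<lambda>a b. (a, b) \<in> R) cs"
    using step.IH by blast
  with step show ?case
    by (intro step.prems[of "cs @ [z]"]) (auto simp: successively_append_iff)
qed

lemma has_e_cycleI:
  assumes "(x, a) \<in> (ddep P)\<^sup>*" "(a, b) \<in> edep P" "(b, x) \<in> (ddep P)\<^sup>*"
  shows "has_e_cycle P"
proof -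
  obtain cs1 where cs1: "cs1 \<noteq> []" "hd cs1 = x" "last cs1 = a"
      "successively (\<lambda>u v. (u, v) \<in> ddep P) cs1"
    using rtrancl_imp_successively_path[OF assms(1)] by blast
  obtain cs2 where cs2: "cs2 \<noteq> []" "hd cs2 = b" "last cs2 = x"
      "successively (\<lambda>u v. (u, v) \<in> ddep P) cs2"
    using rtrancl_imp_successively_path[OF assms(3)] by blast
  have "(a, b) \<in> ddep P" using assms(2) unfolding ddep_def by blast
  then have walk: "successively (\<lambda>u v. (u, v) \<in> ddep P) (cs1 @ cs2)"
    using cs1 cs2 by (simp add: successively_append_iff)
  define i where "i = length cs1 - 1"
  have "(cs1 @ cs2) ! i = a" "(cs1 @ cs2) ! Suc i = b" "Suc i < length (cs1 @ cs2)"
    using cs1 cs2 by (simp_all add: i_def nth_append last_conv_nth hd_conv_nth)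
  then show ?thesis
    unfolding has_e_cycle_def
    using cs1 cs2 walk assms(2)
    by (intro exI[of _ "cs1 @ cs2"]) (auto simp: successively_conv_nth Suc_le_eq)
qed

lemma trancl_relcomp_subset:
  assumes "E \<subseteq> R"
  shows "(R\<^sup>* O E)\<^sup>+ \<subseteq> R\<^sup>* O E O R\<^sup>*"
proof
  fix p assume "p \<in> (R\<^sup>* O E)\<^sup>+"
  then obtain x y where p: "p = (x, y)" "(x, y) \<in> (R\<^sup>* O E)\<^sup>+" by (cases p) auto
  from p(2) have "(x, y) \<in> R\<^sup>* O E O R\<^sup>*"
  proof (induction rule: trancl_induct)
    case (base y)
    then show ?case by blast
  next
    case (step y z)
    from step.hyps(2) have "(y, z) \<in> R\<^sup>*"
      using assms by (blast intro: rtrancl_into_rtrancl)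
    with step.IH show ?case by (blast intro: rtrancl_trans)
  qed
  with p(1) show "p \<in> R\<^sup>* O E O R\<^sup>*" by simp
qed

lemma acyclic_ddep_edep:
  assumes "\<not> has_e_cycle P"
  shows "acyclic ((ddep P)\<^sup>* O edep P)"
proof -
  have "edep P \<subseteq> ddep P" unfolding ddep_def by blast
  then have "((ddep P)\<^sup>* O edep P)\<^sup>+ \<subseteq> (ddep P)\<^sup>* O edep P O (ddep P)\<^sup>*"
    by (rule trancl_relcomp_subset)
  with assms show ?thesis
    unfolding acyclic_def by (blast intro: has_e_cycleI)
qed

text \<open>Y consists of the elements of Z reachable by R from an element z of Z that has no
  successor in Z for the composition of R-paths with E.\<close>

lemma obtain_closed_subset_without_edges_into:
  assumes "finite Z" "Z \<noteq> {}" "acyclic (R\<^sup>* O E)"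
  obtains Y where "Y \<subseteq> Z" "Y \<noteq> {}"
    "\<And>y a. y \<in> Y \<Longrightarrow> (y, a) \<in> R \<Longrightarrow> a \<in> Z \<Longrightarrow> a \<in> Y"
    "\<And>y b. y \<in> Y \<Longrightarrow> (y, b) \<in> E \<Longrightarrow> b \<notin> Z"
proof -
  let ?S = "Restr (R\<^sup>* O E) Z"
  have "finite ?S" using assms(1) by (auto intro: finite_subset[of _ "Z \<times> Z"])
  moreover have "acyclic ?S" using assms(3) by (rule acyclic_subset) blast
  ultimately have "wf (?S\<inverse>)" by (rule finite_acyclic_wf_converse)
  then obtain z where "z \<in> Z" and z_min: "\<And>v. (v, z) \<in> ?S\<inverse> \<Longrightarrow> v \<notin> Z"
    using wfE_min'[OF _ assms(2)] by blast
  show ?thesis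
  proof (rule that[of "{y \<in> Z. (z, y) \<in> R\<^sup>*}"])
    show "{y \<in> Z. (z, y) \<in> R\<^sup>*} \<noteq> {}" using \<open>z \<in> Z\<close> by blast
    show "\<And>y b. y \<in> {y \<in> Z. (z, y) \<in> R\<^sup>*} \<Longrightarrow> (y, b) \<in> E \<Longrightarrow> b \<notin> Z"
      using z_min \<open>z \<in> Z\<close> by blast
  qed (auto intro: rtrancl_into_rtrancl)
qed

abbreviation ordinary_part :: "('p, 'c, 'g) atom set \<Rightarrow> ('p, 'c, 'g) atom set" where
  "ordinary_part A \<equiv> {a \<in> A. is_ordinary a}"

definition repl_rule :: "('p, 'c, 'g) rule \<Rightarrow> ('p, 'c, 'g) rule" where
  "repl_rule r = Rule (H r) (repl ` Bpos r) (repl ` Bneg r)"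

lemma finite_atoms_of:
  assumes "hex_program P"
  shows "finite (atoms_of P)"
  unfolding atoms_of_def
proof (rule finite_UN_I)
  show "finite P" using assms unfolding hex_program_def by blast
  fix r assume "r \<in> P"
  then have fin: "finite (H r)" "finite (Bpos r \<union> Bneg r)"
    using assms unfolding hex_program_def by blast+
  have "inj Ord" by (simp add: inj_def)
  with fin(2) have "finite (Ord -` (Bpos r \<union> Bneg r))" by (rule finite_vimageI)
  with fin(1) show "finite (H r \<union> {a. Ord a \<in> Bpos r \<union> Bneg r})" by (simp add: vimage_def)
qed

lemma atoms_of_subset_guess_prog: "atoms_of P \<subseteq> atoms_of (guess_prog P)"
proof
  fix a assume "a \<in> atoms_of P"
  then obtain r where "r \<in> P" "a \<in> H r \<or> Ord a \<in> Bpos r \<or> Ord a \<in> Bneg r"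
    unfolding atoms_of_def by blast
  moreover have "Ord a \<in> repl ` B" if "Ord a \<in> B" for B
    using that by (metis image_eqI repl.simps(1))
  ultimately have "a \<in> H (repl_rule r) \<or> Ord a \<in> Bpos (repl_rule r) \<or> Ord a \<in> Bneg (repl_rule r)"
    "repl_rule r \<in> guess_prog P"
    unfolding repl_rule_def guess_prog_def by auto
  then show "a \<in> atoms_of (guess_prog P)" unfolding atoms_of_def by blast
qed

lemma guess_prog_ordinary_headE:
  assumes "r' \<in> guess_prog P" "a \<in> H r'" "is_ordinary a"
  obtains r where "r \<in> P" "r' = repl_rule r"
  using assms unfolding guess_prog_def repl_rule_def by auto

lemma orc_local_eqI:
  assumes "orc_local f" "\<And>p args. IP p \<in> set ps \<Longrightarrow> OA p args \<in> A \<longleftrightarrow> OA p args \<in> B"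
  shows "f g A ps cs = f g B ps cs"
  using assms unfolding orc_local_def by blast

lemma body_false_repl_rule:
  assumes "hex_program P" "orc_local f" "compatible_set P f Ahat" "r \<in> P"
  shows "body_false f Ahat (repl_rule r) \<longleftrightarrow> body_false f (ordinary_part Ahat) r"
proof -
  have "sat f Ahat (repl b) \<longleftrightarrow> sat f (ordinary_part Ahat) b" if "b \<in> Bpos r \<union> Bneg r" for b
  proof (cases b)
    case (Ord a)
    with that assms(1,4) have "is_ordinary a" unfolding hex_program_def by blast
    with Ord show ?thesis by simp
  next
    case (Ext g ps cs)
    with that assms(4) have "Ext g ps cs \<in> ext_atoms P" unfolding ext_atoms_def by blast
    with assms(3) have "f g Ahat ps cs \<longleftrightarrow> EA g ps cs \<in> Ahat"
      unfolding compatible_set_def by blast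
    moreover have "f g (ordinary_part Ahat) ps cs = f g Ahat ps cs"
      using assms(2) by (rule orc_local_eqI) simp
    ultimately show ?thesis using Ext by simp
  qed
  then show ?thesis unfolding body_false_def repl_rule_def by auto
qed

lemma body_false_diff_cases:
  assumes "orc_local f" "body_false f (A - X) r"
    and "\<And>g ps cs p args. Ext g ps cs \<in> Bpos r \<union> Bneg r \<Longrightarrow> IP p \<in> set ps \<Longrightarrow> OA p args \<notin> A \<inter> X"
  shows "body_false f A r \<or> (\<exists>a \<in> A \<inter> X. Ord a \<in> Bpos r)"
proof -
  have ext_eq: "f g (A - X) ps cs = f g A ps cs" if "Ext g ps cs \<in> Bpos r \<union> Bneg r" for g ps cs
    using assms(1) by (rule orc_local_eqI) (use assms(3)[OF that] in blast)
  have "\<not> sat f A b \<or> (\<exists>a \<in> A \<inter> X. b = Ord a)" if "b \<in> Bpos r" "\<not> sat f (A - X) b" for b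
    using that ext_eq by (cases b) auto
  moreover have "sat f A b" if "b \<in> Bneg r" "sat f (A - X) b" for b
    using that ext_eq by (cases b) auto
  ultimately show ?thesis
    using assms(2) unfolding body_false_def by blast
qed

lemma unfounded_guess_progI:
  assumes hex: "hex_program P" and loc: "orc_local f" and comp: "compatible_set P f Ahat"
    and unf: "unfounded P f (ordinary_part Ahat) X"
    and Y_sub: "Y \<subseteq> ordinary_part Ahat \<inter> X"
    and dep_closed: "\<And>y a. y \<in> Y \<Longrightarrow> (y, a) \<in> dep P \<Longrightarrow> a \<in> ordinary_part Ahat \<inter> X \<Longrightarrow> a \<in> Y"
    and edep_free: "\<And>y b. y \<in> Y \<Longrightarrow> (y, b) \<in> edep P \<Longrightarrow> b \<notin> ordinary_part Ahat \<inter> X"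
  shows "unfounded (guess_prog P) f Ahat Y"
  unfolding unfounded_def
proof (intro conjI ballI impI)
  let ?A = "ordinary_part Ahat"
  have "X \<subseteq> atoms_of P" using unf unfolding unfounded_def by (rule conjunct1)
  then show "Y \<subseteq> atoms_of (guess_prog P)" using Y_sub atoms_of_subset_guess_prog by blast
  fix r' assume r': "r' \<in> guess_prog P" "H r' \<inter> Y \<noteq> {}"
  then obtain h where h: "h \<in> H r'" "h \<in> Y" by blast
  with Y_sub have "is_ordinary h" by blast
  with r'(1) h(1) obtain r where r: "r \<in> P" "r' = repl_rule r"
    by (rule guess_prog_ordinary_headE)
  then have "h \<in> H r" using h(1) by (simp add: repl_rule_def)
  moreover have "h \<in> X" using h(2) Y_sub by blast
  ultimately have "body_false f ?A r \<or> body_false f (?A - X) r \<or> (H r - X) \<inter> ?A \<noteq> {}"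
    using unf r(1) unfolding unfounded_def by (meson disjoint_iff)
  then consider "body_false f ?A r" | "\<exists>a \<in> ?A \<inter> X. Ord a \<in> Bpos r" | "(H r - X) \<inter> ?A \<noteq> {}"
  proof (elim disjE)
    assume "body_false f (?A - X) r"
    then have "body_false f ?A r \<or> (\<exists>a \<in> ?A \<inter> X. Ord a \<in> Bpos r)"
    proof (rule body_false_diff_cases[OF loc])
      fix g ps cs p args assume "Ext g ps cs \<in> Bpos r \<union> Bneg r" "IP p \<in> set ps"
      with r(1) \<open>h \<in> H r\<close> have "(h, OA p args) \<in> edep P" unfolding edep_def by blast
      with h(2) show "OA p args \<notin> ?A \<inter> X" by (rule edep_free)
    qed
    with that show thesis by blast
  qed (use that in blast)+
  then show "body_false f Ahat r' \<or> body_false f (Ahat - Y) r' \<or> (H r' - Y) \<inter> Ahat \<noteq> {}"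
  proof cases
    case 1
    then show ?thesis using body_false_repl_rule[OF hex loc comp r(1)] r(2) by blast
  next
    case 2
    then obtain a where a: "a \<in> ?A \<inter> X" "Ord a \<in> Bpos r" by blast
    with r(1) \<open>h \<in> H r\<close> have "(h, a) \<in> dep P" unfolding dep_def by blast
    with h(2) have "a \<in> Y" using a(1) by (rule dep_closed)
    then have "\<not> sat f (Ahat - Y) (Ord a)" by simp
    moreover have "Ord a \<in> Bpos r'" using a(2) r(2) by (force simp: repl_rule_def)
    ultimately have "body_false f (Ahat - Y) r'" unfolding body_false_def by blast
    then show ?thesis by blast
  next
    case 3
    then show ?thesis using Y_sub r(2) by (auto simp: repl_rule_def)
  qed
qed

theorem corollary1:
  fixes P :: "('p, 'c, 'g) program" and f :: "('p, 'c, 'g) orcl"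
    and Ahat :: "('p, 'c, 'g) atom set"
  assumes "hex_program P"
    and "orc_local f"
    and "compatible_set P f Ahat"
    and "\<not> has_e_cycle P"
    and "\<forall>X. unfounded (guess_prog P) f Ahat X \<longrightarrow> X = {}"
  shows "unfounded_free P f {a \<in> Ahat. is_ordinary a}"
  unfolding unfounded_free_def
proof (intro allI impI)
  fix X assume unf: "unfounded P f (ordinary_part Ahat) X"
  let ?Z = "ordinary_part Ahat \<inter> X"
  show "?Z = {}"
  proof (rule ccontr)
    assume "?Z \<noteq> {}"
    have "X \<subseteq> atoms_of P" using unf unfolding unfounded_def by (rule conjunct1)
    then have "finite ?Z" using finite_atoms_of[OF assms(1)] by (simp add: finite_subset)
    then obtain Y where Y: "Y \<subseteq> ?Z" "Y \<noteq> {}"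
      "\<And>y a. y \<in> Y \<Longrightarrow> (y, a) \<in> ddep P \<Longrightarrow> a \<in> ?Z \<Longrightarrow> a \<in> Y"
      "\<And>y b. y \<in> Y \<Longrightarrow> (y, b) \<in> edep P \<Longrightarrow> b \<notin> ?Z"
      using \<open>?Z \<noteq> {}\<close> acyclic_ddep_edep[OF assms(4)]
      by (rule obtain_closed_subset_without_edges_into) blast
    have "unfounded (guess_prog P) f Ahat Y"
      using assms(1-3) unf Y(1) _ Y(4)
    proof (rule unfounded_guess_progI)
      show "a \<in> Y" if "y \<in> Y" "(y, a) \<in> dep P" "a \<in> ?Z" for y a
        using that Y(3) unfolding ddep_def by blast
    qed
    with assms(5) Y(2) show False by blast
  qed
qed

end
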